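(* Let $d\ge0$ be an integer, let $\mathcal W=\mathcal O\oplus\mathcal O$ on $\mathbb P^1$, and let $\mathcal L\subset\mathcal W$ be a line subbundle with $\mathcal L\cong\mathcal O(-d)$. Let $p_1,\dots,p_m\in\mathbb P^1$ be distinct points and let $\tilde{\mathcal W}$ be the shift of $\mathcal W$ along $\mathcal L$ at these points, i.e. the subsheaf of $\mathcal W(p_1+\cdots+p_m)$ of local sections $s$ such that $(t_is)(p_i)\in\mathcal L_{p_i}$ for each $i$, where $t_i$ is a local parameter at $p_i$. If $m>2d+1$, then $\tilde{\mathcal W}$ is not evenly split.
   Context: A rank $2$ bundle on $\mathbb P^1$ is evenly split if it is isomorphic to $\mathcal O(a)\oplus\mathcal O(b)$ with $|a-b|\le1$. *)

theory Defs
  imports "HOL-Computational_Algebra.Computational_Algebra"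
begin

text \<open>Model: P^1 over the complex numbers, with points  Some a  (a in C, affine
coordinate z) and  None  (the point at infinity).  Rank 2 vector bundles
considered here are locally free subsheaves of the constant sheaf C(z)^2; such a
subsheaf is determined by its stalks, given as a predicate  F q s  saying that the
rational vector s lies in the stalk F_q at the point q.\<close>

type_synonym rf = "complex poly fract"
type_synonym pt = "complex option"

definition regular_at :: "pt \<Rightarrow> rf \<Rightarrow> bool" where
  "regular_at q r = (\<exists>n d. d \<noteq> 0 \<and> r = Fract n d \<and>
     (case q of Some a \<Rightarrow> poly d a \<noteq> 0 | None \<Rightarrow> degree n \<le> degree d))"

definition value_at :: "pt \<Rightarrow> rf \<Rightarrow> complex" where
  "value_at q r = (THE v. \<exists>n d. d \<noteq> 0 \<and> r = Fract n d \<and>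
     (case q of Some a \<Rightarrow> poly d a \<noteq> 0 \<and> v = poly n a / poly d a
              | None \<Rightarrow> degree n \<le> degree d \<and> v = coeff n (degree d) / lead_coeff d))"

definition zcoord :: rf where "zcoord = Fract [:0, 1:] 1"

definition local_param :: "pt \<Rightarrow> rf" where
  "local_param q = (case q of Some a \<Rightarrow> Fract [:-a, 1:] 1 | None \<Rightarrow> Fract 1 [:0, 1:])"

text \<open>Stalks of O(a) + O(b), realised as O(a\<infinity>) + O(b\<infinity>) inside C(z)^2.\<close>
definition split_stalk :: "int \<Rightarrow> int \<Rightarrow> pt \<Rightarrow> rf \<times> rf \<Rightarrow> bool" where
  "split_stalk a b q s = (case q of
      Some _ \<Rightarrow> regular_at q (fst s) \<and> regular_at q (snd s)
    | None \<Rightarrow> regular_at None (zcoord powi (-a) * fst s) \<and>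
              regular_at None (zcoord powi (-b) * snd s))"

text \<open>A line subbundle L of W = O + O with L \<cong> O(-d) is the image of an injective
bundle map O(-d) \<rightarrow> O + O, i.e. a pair (F,G) of binary forms of degree d without
common zero on P^1.  We record them by their dehomogenisations f = F(z,1), g = G(z,1):
they have degree \<le> d, no common finite zero (coprime), and F, G do not both vanish at
infinity (not both coefficients of z^d are zero).\<close>
definition line_subbundle :: "nat \<Rightarrow> complex poly \<Rightarrow> complex poly \<Rightarrow> bool" where
  "line_subbundle d f g = (degree f \<le> d \<and> degree g \<le> d \<and> coprime f g \<and>
                           (coeff f d \<noteq> 0 \<or> coeff g d \<noteq> 0))"

definition line_fiber :: "nat \<Rightarrow> complex poly \<Rightarrow> complex poly \<Rightarrow> pt \<Rightarrow> (complex \<times> complex) set" where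
  "line_fiber d f g q = (case q of
      Some a \<Rightarrow> {(c * poly f a, c * poly g a) | c. True}
    | None \<Rightarrow> {(c * coeff f d, c * coeff g d) | c. True})"

definition shift_stalk :: "nat \<Rightarrow> complex poly \<Rightarrow> complex poly \<Rightarrow> pt set \<Rightarrow> pt \<Rightarrow> rf \<times> rf \<Rightarrow> bool" where
  "shift_stalk d f g P q s =
     (if q \<in> P then
        regular_at q (local_param q * fst s) \<and> regular_at q (local_param q * snd s) \<and>
        (value_at q (local_param q * fst s), value_at q (local_param q * snd s)) \<in> line_fiber d f g q
      else regular_at q (fst s) \<and> regular_at q (snd s))"

text \<open>Isomorphism of two such subsheaves of C(z)^2: an isomorphism of O-modules
extends to a C(z)-linear automorphism of C(z)^2, i.e. an invertible 2x2 matrix over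
C(z), mapping every stalk of the first onto the corresponding stalk of the second.\<close>
definition sheaf_iso :: "(pt \<Rightarrow> rf \<times> rf \<Rightarrow> bool) \<Rightarrow> (pt \<Rightarrow> rf \<times> rf \<Rightarrow> bool) \<Rightarrow> bool" where
  "sheaf_iso F G = (\<exists>a b c e :: rf. a * e - b * c \<noteq> 0 \<and>
      (\<forall>q s. F q s \<longleftrightarrow> G q (a * fst s + b * snd s, c * fst s + e * snd s)))"

definition evenly_split :: "(pt \<Rightarrow> rf \<times> rf \<Rightarrow> bool) \<Rightarrow> bool" where
  "evenly_split F = (\<exists>a b :: int. \<bar>a - b\<bar> \<le> 1 \<and> sheaf_iso F (split_stalk a b))"

end

theory Submission
  imports Defs
begin

text \<open>Let \<open>m\<close> be the number of points and suppose an invertible matrix \<open>M\<close> over \<open>C(z)\<close>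
  maps the shift isomorphically onto \<open>O(a) \<oplus> O(b)\<close>. The shift contains \<open>O \<oplus> O\<close>, so the
  entries of \<open>M\<close> are regular at every finite point, hence polynomials, and so is \<open>det M\<close>.
  Conversely \<open>M\<^sup>-\<^sup>1\<close> maps local frames of \<open>O(a) \<oplus> O(b)\<close> into the shift, where
  determinants have at most simple poles at the points \<open>p\<^sub>i\<close>; comparing with
  \<open>det M\<^sup>-\<^sup>1 = 1 / det M\<close> at the finite points and at infinity gives \<open>a + b \<le> m\<close>.
  On the other hand \<open>(f, g) / \<Prod>(z - p\<^sub>i)\<close> is a section of the shift that survives the twist
  by \<open>z\<^sup>m\<^sup>-\<^sup>d\<close> at infinity, i.e. a nonzero map \<open>O(m - d) \<rightarrow>\<close> shift; composed with \<open>M\<close>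
  it forces \<open>m - d \<le> max a b\<close>. If \<open>|a - b| \<le> 1\<close> the two bounds give \<open>m \<le> 2d + 1\<close>.\<close>

section \<open>Regular functions on the projective line\<close>

lemma coeff_mult_add_if_degree_le:
  fixes p q :: "'a::idom poly"
  assumes "degree p \<le> i" "degree q \<le> j"
  shows "coeff (p * q) (i + j) = coeff p i * coeff q j"
proof (cases "degree p = i \<and> degree q = j")
  case True
  then show ?thesis by (metis coeff_mult_degree_sum)
next
  case False
  then have "degree (p * q) < i + j"
    using degree_mult_le[of p q] assms by linarith
  moreover have "coeff p i * coeff q j = 0"
    using False assms by (metis coeff_eq_0 le_neq_implies_less mult_eq_0_iff)
  ultimately show ?thesis by (simp add: coeff_eq_0)
qed

lemma regular_at_SomeI: "d \<noteq> 0 \<Longrightarrow> poly d a \<noteq> 0 \<Longrightarrow> regular_at (Some a) (Fract n d)"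
  unfolding regular_at_def by auto

lemma regular_at_NoneI: "d \<noteq> 0 \<Longrightarrow> degree n \<le> degree d \<Longrightarrow> regular_at None (Fract n d)"
  unfolding regular_at_def by auto

lemma regular_at_SomeE:
  assumes "regular_at (Some a) r"
  obtains n d where "d \<noteq> 0" "r = Fract n d" "poly d a \<noteq> 0"
  using assms unfolding regular_at_def by auto

lemma regular_at_NoneE:
  assumes "regular_at None r"
  obtains n d where "d \<noteq> 0" "r = Fract n d" "degree n \<le> degree d"
  using assms unfolding regular_at_def by auto

lemma order_le_if_regular_at_Some:
  assumes "d \<noteq> 0" "n \<noteq> 0" "regular_at (Some a) (Fract n d)"
  shows "order a d \<le> order a n"
proof -
  obtain n' d' where d': "d' \<noteq> 0" "Fract n d = Fract n' d'" "poly d' a \<noteq> 0"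
    using assms(3) by (rule regular_at_SomeE)
  then have cross: "n * d' = n' * d"
    using assms by (simp add: eq_fract)
  then have "n' \<noteq> 0"
    using assms d' by auto
  have "order a (n * d') = order a n"
    using assms d' by (simp add: order_mult order_0I)
  moreover have "order a (n' * d) = order a n' + order a d"
    using assms \<open>n' \<noteq> 0\<close> by (simp add: order_mult)
  ultimately show ?thesis
    using cross by simp
qed

lemma degree_le_if_regular_at_None:
  assumes "d \<noteq> 0" "n \<noteq> 0" "regular_at None (Fract n d)"
  shows "degree n \<le> degree d"
proof -
  obtain n' d' where d': "d' \<noteq> 0" "Fract n d = Fract n' d'" "degree n' \<le> degree d'"
    using assms(3) by (rule regular_at_NoneE)
  then have cross: "n * d' = n' * d"
    using assms by (simp add: eq_fract)
  then have "n' \<noteq> 0"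
    using assms d' by auto
  have "degree n + degree d' = degree n' + degree d"
    using cross assms d' \<open>n' \<noteq> 0\<close> by (metis degree_mult_eq)
  then show ?thesis
    using d' by linarith
qed

lemma value_at_Some_Fract:
  assumes "d \<noteq> 0" "poly d a \<noteq> 0"
  shows "value_at (Some a) (Fract n d) = poly n a / poly d a"
  unfolding value_at_def
proof (rule the_equality)
  fix v
  assume "\<exists>n' d'. d' \<noteq> 0 \<and> Fract n d = Fract n' d' \<and>
    (case Some a of Some a \<Rightarrow> poly d' a \<noteq> 0 \<and> v = poly n' a / poly d' a
     | None \<Rightarrow> degree n' \<le> degree d' \<and> v = coeff n' (degree d') / lead_coeff d')"
  then obtain n' d' where d': "d' \<noteq> 0" "Fract n d = Fract n' d'" "poly d' a \<noteq> 0"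
    and v: "v = poly n' a / poly d' a"
    by auto
  then have "poly n a * poly d' a = poly n' a * poly d a"
    using assms by (metis eq_fract(1) poly_mult)
  then show "v = poly n a / poly d a"
    using v assms d' by (simp add: frac_eq_eq)
qed (use assms in auto)

lemma value_at_None_Fract:
  assumes "d \<noteq> 0" "degree n \<le> degree d"
  shows "value_at None (Fract n d) = coeff n (degree d) / lead_coeff d"
  unfolding value_at_def
proof (rule the_equality)
  fix v
  assume "\<exists>n' d'. d' \<noteq> 0 \<and> Fract n d = Fract n' d' \<and>
    (case None of Some a \<Rightarrow> poly d' a \<noteq> 0 \<and> v = poly n' a / poly d' a
     | None \<Rightarrow> degree n' \<le> degree d' \<and> v = coeff n' (degree d') / lead_coeff d')"
  then obtain n' d' where d': "d' \<noteq> 0" "Fract n d = Fract n' d'" "degree n' \<le> degree d'"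
    and v: "v = coeff n' (degree d') / lead_coeff d'"
    by auto
  then have "coeff (n * d') (degree d + degree d') = coeff (n' * d) (degree d' + degree d)"
    using assms by (simp add: eq_fract add.commute)
  then have "coeff n (degree d) * lead_coeff d' = coeff n' (degree d') * lead_coeff d"
    using assms d' by (simp add: coeff_mult_add_if_degree_le)
  then show "v = coeff n (degree d) / lead_coeff d"
    using v assms d' by (simp add: frac_eq_eq)
qed (use assms in auto)

lemma
  assumes "regular_at q x" "regular_at q y"
  shows regular_at_mult: "regular_at q (x * y)"
    and value_at_mult: "value_at q (x * y) = value_at q x * value_at q y"
proof -
  have "regular_at q (x * y) \<and> value_at q (x * y) = value_at q x * value_at q y"
  proof (cases q)
    case None
    obtain n d where x: "d \<noteq> 0" "x = Fract n d" "degree n \<le> degree d"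
      using assms(1) None regular_at_NoneE by blast
    obtain n' d' where y: "d' \<noteq> 0" "y = Fract n' d'" "degree n' \<le> degree d'"
      using assms(2) None regular_at_NoneE by blast
    have dd: "degree (d * d') = degree d + degree d'"
      using x y degree_mult_eq by blast
    have deg: "degree (n * n') \<le> degree (d * d')"
      using degree_mult_le[of n n'] x y dd by linarith
    have "value_at None (x * y) = coeff (n * n') (degree d + degree d') / lead_coeff (d * d')"
      using value_at_None_Fract[OF _ deg] x y dd by simp
    also have "\<dots> = (coeff n (degree d) / lead_coeff d) * (coeff n' (degree d') / lead_coeff d')"
      using x y by (simp add: coeff_mult_add_if_degree_le lead_coeff_mult)
    also have "\<dots> = value_at None x * value_at None y"
      using x y by (simp add: value_at_None_Fract)
    finally show ?thesis
      using None x y deg by (simp add: regular_at_NoneI)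
  next
    case (Some a)
    obtain n d where x: "d \<noteq> 0" "x = Fract n d" "poly d a \<noteq> 0"
      using assms(1) Some regular_at_SomeE by blast
    obtain n' d' where y: "d' \<noteq> 0" "y = Fract n' d'" "poly d' a \<noteq> 0"
      using assms(2) Some regular_at_SomeE by blast
    show ?thesis
      using Some x y by (simp add: regular_at_SomeI value_at_Some_Fract)
  qed
  then show "regular_at q (x * y)" "value_at q (x * y) = value_at q x * value_at q y"
    by simp_all
qed

lemma
  assumes "regular_at q x" "regular_at q y"
  shows regular_at_diff: "regular_at q (x - y)"
    and value_at_diff: "value_at q (x - y) = value_at q x - value_at q y"
proof -
  have "regular_at q (x - y) \<and> value_at q (x - y) = value_at q x - value_at q y"
  proof (cases q)
    case None
    obtain n d where x: "d \<noteq> 0" "x = Fract n d" "degree n \<le> degree d"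
      using assms(1) None regular_at_NoneE by blast
    obtain n' d' where y: "d' \<noteq> 0" "y = Fract n' d'" "degree n' \<le> degree d'"
      using assms(2) None regular_at_NoneE by blast
    have dd: "degree (d * d') = degree d + degree d'"
      using x y degree_mult_eq by blast
    have deg: "degree (n * d' - n' * d) \<le> degree (d * d')"
      using degree_mult_le[of n d'] degree_mult_le[of n' d] x y dd
      by (intro degree_diff_le) linarith+
    have "value_at None (x - y) =
        coeff (n * d' - n' * d) (degree d + degree d') / lead_coeff (d * d')"
      using value_at_None_Fract[OF _ deg] x y dd by simp
    also have "\<dots> = (coeff n (degree d) * lead_coeff d' - coeff n' (degree d') * lead_coeff d)
        / (lead_coeff d * lead_coeff d')"
      using coeff_mult_add_if_degree_le[of n "degree d" d' "degree d'"]
        coeff_mult_add_if_degree_le[of n' "degree d'" d "degree d"] x y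
      by (simp add: lead_coeff_mult add.commute)
    also have "\<dots> = value_at None x - value_at None y"
      using x y by (simp add: value_at_None_Fract field_simps)
    finally show ?thesis
      using None x y deg by (simp add: regular_at_NoneI)
  next
    case (Some a)
    obtain n d where x: "d \<noteq> 0" "x = Fract n d" "poly d a \<noteq> 0"
      using assms(1) Some regular_at_SomeE by blast
    obtain n' d' where y: "d' \<noteq> 0" "y = Fract n' d'" "poly d' a \<noteq> 0"
      using assms(2) Some regular_at_SomeE by blast
    show ?thesis
      using Some x y by (simp add: regular_at_SomeI value_at_Some_Fract field_simps)
  qed
  then show "regular_at q (x - y)" "value_at q (x - y) = value_at q x - value_at q y"
    by simp_all
qed

lemma regular_at_0: "regular_at q 0"
  by (cases q) (auto simp: Zero_fract_def regular_at_SomeI regular_at_NoneI)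

lemma regular_at_1: "regular_at q 1"
  by (cases q) (auto simp: One_fract_def regular_at_SomeI regular_at_NoneI)

lemma regular_at_local_param: "regular_at q (local_param q)"
  by (cases q) (auto simp: local_param_def regular_at_SomeI regular_at_NoneI)

lemma value_at_local_param: "value_at q (local_param q) = 0"
  by (cases q) (auto simp: local_param_def value_at_Some_Fract value_at_None_Fract)

lemma local_param_nonzero: "local_param q \<noteq> 0"
  by (cases q) (simp_all add: local_param_def eq_fract Zero_fract_def)

lemma regular_at_divide_local_param:
  assumes "regular_at q (local_param q * y)" "value_at q (local_param q * y) = 0"
  shows "regular_at q y"
proof (cases q)
  case None
  obtain n d where nd: "d \<noteq> 0" "local_param q * y = Fract n d" "degree n \<le> degree d"
    using assms(1) None regular_at_NoneE by blast
  have "coeff n (degree d) = 0"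
    using assms(2) nd None by (simp add: value_at_None_Fract)
  have "degree ([:0, 1:] * n) \<le> degree d"
  proof (cases "n = 0")
    case False
    then have "degree n < degree d"
      using nd \<open>coeff n (degree d) = 0\<close> by (metis le_neq_implies_less leading_coeff_0_iff)
    then show ?thesis
      using degree_mult_le[of "[:0, 1:]" n] by simp
  qed simp
  moreover have "local_param q * Fract ([:0, 1:] * n) d = local_param q * y"
    using None nd by (simp add: local_param_def eq_fract mult_pCons_right)
  ultimately show ?thesis
    using None nd local_param_nonzero by (metis mult_cancel_left regular_at_NoneI)
next
  case (Some a)
  obtain n d where nd: "d \<noteq> 0" "local_param q * y = Fract n d" "poly d a \<noteq> 0"
    using assms(1) Some regular_at_SomeE by blast
  have "poly n a = 0"
    using assms(2) nd Some by (simp add: value_at_Some_Fract)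
  then obtain n1 where "n = [:-a, 1:] * n1"
    by (metis dvdE minus_minus dvd_iff_poly_eq_0)
  then have "local_param q * Fract n1 d = local_param q * y"
    using Some nd by (simp add: local_param_def)
  then show ?thesis
    using Some nd local_param_nonzero by (metis mult_cancel_left regular_at_SomeI)
qed

lemma zcoord_nonzero: "zcoord \<noteq> 0"
  by (simp add: zcoord_def eq_fract Zero_fract_def)

lemma zcoord_power: "zcoord ^ k = Fract (monom 1 k) 1"
  by (induction k) (simp_all add: zcoord_def One_fract_def monom_Suc)

lemma local_param_None: "local_param None = inverse zcoord"
  by (simp add: local_param_def zcoord_def)

lemma local_param_None_power_mult:
  "local_param None ^ n * zcoord powi j = zcoord powi (j - int n)"
proof -
  have "local_param None ^ n = zcoord powi (- int n)"
    by (simp add: local_param_None power_int_minus power_inverse)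
  then show ?thesis
    using zcoord_nonzero by (simp flip: power_int_add)
qed

lemma zcoord_power_int_mult_Fract:
  assumes "d \<noteq> 0"
  shows "zcoord powi j * Fract n d =
    (if j \<ge> 0 then Fract (monom 1 (nat j) * n) d else Fract n (monom 1 (nat (-j)) * d))"
proof (cases "j \<ge> 0")
  case True
  then show ?thesis
    using assms by (simp add: power_int_def zcoord_power)
next
  case False
  have "inverse zcoord ^ k = Fract 1 (monom 1 k)" for k
    by (induction k) (simp_all add: zcoord_def One_fract_def monom_Suc)
  then show ?thesis
    using False assms by (simp add: power_int_def mult.commute)
qed

lemma degree_monom_1_mult:
  "(p :: 'a::idom poly) \<noteq> 0 \<Longrightarrow> degree (monom 1 k * p) = k + degree p"
  by (simp add: degree_mult_eq degree_monom_eq)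

lemma
  fixes n d :: "complex poly"
  assumes "d \<noteq> 0" "j + int (degree n) \<le> int (degree d)"
  shows regular_at_None_zcoord_power_int: "regular_at None (zcoord powi j * Fract n d)"
    and value_at_None_zcoord_power_int:
      "value_at None (zcoord powi j * Fract n d) = coeff n (nat (int (degree d) - j)) / lead_coeff d"
proof -
  have "regular_at None (zcoord powi j * Fract n d) \<and>
    value_at None (zcoord powi j * Fract n d) = coeff n (nat (int (degree d) - j)) / lead_coeff d"
  proof (cases "n = 0")
    case True
    then have "Fract n d = 0"
      using assms by (simp add: Zero_fract_def eq_fract)
    then show ?thesis
      using regular_at_0 value_at_None_Fract[of 1 0] True by (simp flip: Zero_fract_def)
  next
    case False
    show ?thesis
    proof (cases "j \<ge> 0")
      case True
      then have "degree (monom 1 (nat j) * n) \<le> degree d"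
        using assms False by (simp add: degree_monom_1_mult)
      moreover have "coeff (monom 1 (nat j) * n) (degree d) = coeff n (nat (int (degree d) - j))"
        using True assms by (simp add: coeff_monom_mult nat_diff_distrib')
      ultimately show ?thesis
        using True assms by (simp add: zcoord_power_int_mult_Fract regular_at_NoneI value_at_None_Fract)
    next
      case False
      then have "degree n \<le> degree (monom 1 (nat (-j)) * d)"
        using assms by (simp add: degree_monom_1_mult)
      moreover have "lead_coeff (monom 1 (nat (-j)) * d) = lead_coeff d"
        by (simp add: lead_coeff_mult degree_monom_eq)
      moreover have "degree (monom 1 (nat (-j)) * d) = nat (int (degree d) - j)"
        using False assms by (simp add: degree_monom_1_mult)
      ultimately show ?thesis
        using False assms by (simp add: zcoord_power_int_mult_Fract regular_at_NoneI value_at_None_Fract)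
    qed
  qed
  then show "regular_at None (zcoord powi j * Fract n d)"
    "value_at None (zcoord powi j * Fract n d) = coeff n (nat (int (degree d) - j)) / lead_coeff d"
    by simp_all
qed

lemma regular_at_None_zcoord_power_int_iff:
  fixes n d :: "complex poly"
  assumes "n \<noteq> 0" "d \<noteq> 0"
  shows "regular_at None (zcoord powi j * Fract n d) \<longleftrightarrow> j + int (degree n) \<le> int (degree d)"
proof
  assume reg: "regular_at None (zcoord powi j * Fract n d)"
  show "j + int (degree n) \<le> int (degree d)"
  proof (cases "j \<ge> 0")
    case True
    then have "degree (monom 1 (nat j) * n) \<le> degree d"
      using reg assms by (intro degree_le_if_regular_at_None) (simp_all add: zcoord_power_int_mult_Fract)
    then show ?thesis
      using True assms by (simp add: degree_monom_1_mult)
  next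
    case False
    then have "degree n \<le> degree (monom 1 (nat (-j)) * d)"
      using reg assms by (intro degree_le_if_regular_at_None) (simp_all add: zcoord_power_int_mult_Fract)
    then show ?thesis
      using False assms by (simp add: degree_monom_1_mult)
  qed
qed (use assms regular_at_None_zcoord_power_int in blast)

lemma regular_at_Some_imp_poly:
  assumes "\<And>a. regular_at (Some a) r"
  obtains p where "r = Fract p 1"
proof -
  have "\<exists>p. r = Fract p 1" if "d \<noteq> 0" "r = Fract n d" for n d
    using that
  proof (induction "degree d" arbitrary: n d rule: less_induct)
    case less
    show ?case
    proof (cases "\<exists>a. poly d a = 0")
      case True
      then obtain a where "poly d a = 0" ..
      then have "order a d \<noteq> 0"
        using less.prems(1) order_root by blast
      then have "poly n a = 0"
        using order_le_if_regular_at_Some[OF less.prems(1)] assms less.prems(2)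
        by (metis order_root le_zero_eq)
      then obtain n1 d1 where "n = [:-a, 1:] * n1" "d = [:-a, 1:] * d1"
        using \<open>poly d a = 0\<close> by (metis dvdE minus_minus dvd_iff_poly_eq_0)
      moreover from this have "d1 \<noteq> 0" "degree d1 < degree d"
        using less.prems(1) by (auto simp: degree_mult_eq simp del: mult_pCons_left)
      ultimately show ?thesis
        using less by (metis mult_fract_cancel pCons_eq_0_iff zero_neq_one)
    next
      case False
      then have "degree d = 0"
        using fundamental_theorem_of_algebra constant_degree by blast
      then obtain c where "d = [:c:]" "c \<noteq> 0"
        using less.prems(1) by (metis degree_eq_zeroE pCons_eq_0_iff)
      then show ?thesis
        using less.prems(2) by (auto simp: eq_fract intro!: exI[of _ "smult (1 / c) n"])
    qed
  qed
  then show ?thesis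
    using that by (cases r) blast
qed

lemma degree_le_card_if_order_le:
  fixes D :: "complex poly"
  assumes "D \<noteq> 0" "finite S" "\<And>q. order q D \<le> of_bool (q \<in> S)"
  shows "degree D \<le> card S"
proof -
  have "proots D \<subseteq># mset_set S"
  proof (rule mset_subset_eqI)
    fix a
    show "count (proots D) a \<le> count (mset_set S) a"
      using assms(3)[of a] assms(1,2) by (cases "a \<in> S") (auto simp: count_mset_set)
  qed
  then have "size (proots D) \<le> size (mset_set S)"
    by (rule size_mset_mono)
  then show ?thesis
    by (simp add: size_proots_complex)
qed

definition vanishing_poly :: "'a::comm_ring_1 set \<Rightarrow> 'a poly" where
  "vanishing_poly S = (\<Prod>q\<in>S. [:-q, 1:])"

lemma vanishing_poly_nonzero: "vanishing_poly (S :: 'a::idom set) \<noteq> 0"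
  unfolding vanishing_poly_def by (cases "finite S") auto

lemma degree_vanishing_poly: "finite S \<Longrightarrow> degree (vanishing_poly (S :: 'a::idom set)) = card S"
  unfolding vanishing_poly_def by (subst degree_prod_sum_eq) auto

lemma lead_coeff_vanishing_poly: "lead_coeff (vanishing_poly (S :: 'a::idom set)) = 1"
  unfolding vanishing_poly_def by (simp add: lead_coeff_prod)

lemma poly_vanishing_poly_nonzero:
  "q \<notin> S \<Longrightarrow> poly (vanishing_poly (S :: 'a::idom set)) q \<noteq> 0"
  unfolding vanishing_poly_def by (cases "finite S") (auto simp: poly_prod)

lemma vanishing_poly_remove:
  "finite S \<Longrightarrow> q \<in> S \<Longrightarrow> vanishing_poly S = [:-q, 1:] * vanishing_poly (S - {q})"
  unfolding vanishing_poly_def by (rule prod.remove)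

lemma card_option_set:
  assumes "finite P"
  shows "card P = card (Some -` P) + of_bool (None \<in> P)"
proof -
  have "P - {None} = Some ` (Some -` P)"
    by (auto elim: option.exhaust_sel)
  then have "card (P - {None}) = card (Some -` P)"
    by (metis card_image inj_Some inj_on_subset subset_UNIV)
  then show ?thesis
    using assms card_Suc_Diff1[OF assms, of None] by (cases "None \<in> P") simp_all
qed

lemma order_le_if_regular_at_local_param_power:
  assumes "D \<noteq> 0" "regular_at (Some a) (local_param (Some a) ^ k * Fract 1 D)"
  shows "order a D \<le> k"
proof -
  have "local_param (Some a) ^ k = Fract ([:-a, 1:] ^ k) 1"
    by (induction k) (simp_all add: local_param_def One_fract_def)
  then have "regular_at (Some a) (Fract ([:-a, 1:] ^ k) D)"
    using assms(2) by simp
  then have "order a D \<le> order a ([:-a, 1:] ^ k)"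
    using assms(1) by (intro order_le_if_regular_at_Some) simp_all
  then show ?thesis
    by (simp add: order_power_n_n)
qed

section \<open>Sections of the shift\<close>

definition lin2 :: "'a::comm_ring \<Rightarrow> 'a \<Rightarrow> 'a \<Rightarrow> 'a \<Rightarrow> 'a \<times> 'a \<Rightarrow> 'a \<times> 'a" where
  "lin2 a b c e s = (a * fst s + b * snd s, c * fst s + e * snd s)"

definition det2 :: "'a::comm_ring \<times> 'a \<Rightarrow> 'a \<times> 'a \<Rightarrow> 'a" where
  "det2 s t = fst s * snd t - fst t * snd s"

lemma det2_lin2: "det2 (lin2 a b c e s) (lin2 a b c e t) = (a * e - b * c) * det2 s t"
  by (simp add: det2_def lin2_def algebra_simps)

lemma lin2_scale:
  "lin2 a b c e (r * x, r * y) = (r * fst (lin2 a b c e (x, y)), r * snd (lin2 a b c e (x, y)))"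
  by (simp add: lin2_def algebra_simps)

lemma lin2_inverse:
  fixes a b c e :: "'a::field"
  assumes "D = a * e - b * c" "D \<noteq> 0"
  shows "lin2 a b c e (lin2 (e / D) (- b / D) (- c / D) (a / D) s) = s"
proof -
  have "a * (e / D * x + - b / D * y) + b * (- c / D * x + a / D * y) = (a * e - b * c) / D * x"
    "c * (e / D * x + - b / D * y) + e * (- c / D * x + a / D * y) = (a * e - b * c) / D * y"
    for x y
    by (simp_all add: divide_inverse algebra_simps)
  then show ?thesis
    using assms by (simp add: lin2_def)
qed

lemma lin2_eq_zero_iff:
  fixes a b c e :: "'a::field"
  assumes "a * e - b * c \<noteq> 0"
  shows "lin2 a b c e (x, y) = (0, 0) \<longleftrightarrow> (x, y) = (0, 0)"
proof
  assume "lin2 a b c e (x, y) = (0, 0)"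
  then have "a * x + b * y = 0" "c * x + e * y = 0"
    by (simp_all add: lin2_def)
  moreover have "(a * e - b * c) * x = e * (a * x + b * y) - b * (c * x + e * y)"
    "(a * e - b * c) * y = a * (c * x + e * y) - c * (a * x + b * y)"
    by (simp_all add: algebra_simps)
  ultimately show "(x, y) = (0, 0)"
    using assms by simp
qed (simp add: lin2_def)

lemma sheaf_isoE:
  assumes "sheaf_iso F G"
  obtains a b c e where "a * e - b * c \<noteq> 0" "\<And>q s. F q s \<longleftrightarrow> G q (lin2 a b c e s)"
  using assms unfolding sheaf_iso_def lin2_def by blast

lemma shift_stalk_regularI:
  assumes "regular_at q x" "regular_at q y"
  shows "shift_stalk d f g P q (x, y)"
proof -
  have "(0, 0) \<in> line_fiber d f g q"
    by (cases q) (auto simp: line_fiber_def)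
  then show ?thesis
    using assms regular_at_local_param
    by (simp add: shift_stalk_def regular_at_mult value_at_mult value_at_local_param)
qed

lemma regular_at_det2_shift_stalk:
  assumes s: "shift_stalk d f g P q s" and t: "shift_stalk d f g P q t"
  shows "regular_at q (local_param q ^ of_bool (q \<in> P) * det2 s t)"
proof (cases "q \<in> P")
  case False
  then show ?thesis
    using assms by (simp add: shift_stalk_def det2_def regular_at_diff regular_at_mult)
next
  case True
  define \<tau> where "\<tau> = local_param q"
  obtain u v where fiber: "line_fiber d f g q = {(c * u, c * v) | c. True}"
    by (cases q) (auto simp: line_fiber_def)
  have reg: "regular_at q (\<tau> * fst s)" "regular_at q (\<tau> * snd s)"
    "regular_at q (\<tau> * fst t)" "regular_at q (\<tau> * snd t)"
    using True s t by (simp_all add: shift_stalk_def \<tau>_def)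
  obtain c1 where "value_at q (\<tau> * fst s) = c1 * u" "value_at q (\<tau> * snd s) = c1 * v"
    using True s fiber by (auto simp: shift_stalk_def \<tau>_def)
  moreover obtain c2 where "value_at q (\<tau> * fst t) = c2 * u" "value_at q (\<tau> * snd t) = c2 * v"
    using True t fiber by (auto simp: shift_stalk_def \<tau>_def)
  \<comment> \<open>\<open>(\<tau> s)(q)\<close> and \<open>(\<tau> t)(q)\<close> lie on the line \<open>L\<^sub>q\<close>, so \<open>\<tau>\<^sup>2 det2 s t\<close> vanishes at \<open>q\<close>.\<close>
  moreover have "\<tau> * (\<tau> * det2 s t) = (\<tau> * fst s) * (\<tau> * snd t) - (\<tau> * fst t) * (\<tau> * snd s)"
    by (simp add: det2_def algebra_simps)
  ultimately have "regular_at q (\<tau> * (\<tau> * det2 s t))" "value_at q (\<tau> * (\<tau> * det2 s t)) = 0"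
    using reg by (simp_all add: regular_at_diff value_at_diff regular_at_mult value_at_mult)
  then show ?thesis
    using True regular_at_divide_local_param by (simp add: \<tau>_def)
qed

lemma regular_at_det2_shift_iso:
  assumes det: "\<alpha> * \<epsilon> - \<beta> * \<gamma> \<noteq> 0"
    and iso: "\<And>q s. shift_stalk d f g P q s \<longleftrightarrow> G q (lin2 \<alpha> \<beta> \<gamma> \<epsilon> s)"
    and "G q s" "G q t"
  shows "regular_at q (local_param q ^ of_bool (q \<in> P) * (det2 s t / (\<alpha> * \<epsilon> - \<beta> * \<gamma>)))"
proof -
  define D where "D = \<alpha> * \<epsilon> - \<beta> * \<gamma>"
  let ?N = "lin2 (\<epsilon> / D) (- \<beta> / D) (- \<gamma> / D) (\<alpha> / D)"
  have N: "shift_stalk d f g P q (?N s)" "shift_stalk d f g P q (?N t)"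
    using iso assms(3,4) lin2_inverse[OF D_def det[folded D_def]] by simp_all
  have "\<epsilon> / D * (\<alpha> / D) - - \<beta> / D * (- \<gamma> / D) = (\<alpha> * \<epsilon> - \<beta> * \<gamma>) / (D * D)"
    by (simp add: divide_inverse algebra_simps)
  then have "det2 (?N s) (?N t) = det2 s t / D"
    using det by (simp add: det2_lin2 flip: D_def)
  with regular_at_det2_shift_stalk[OF N] show ?thesis
    by (simp add: D_def)
qed

lemma split_degree_sum_le_card:
  assumes "finite P" "sheaf_iso (shift_stalk d f g P) (split_stalk a b)"
  shows "a + b \<le> int (card P)"
proof -
  obtain \<alpha> \<beta> \<gamma> \<epsilon> where det: "\<alpha> * \<epsilon> - \<beta> * \<gamma> \<noteq> 0"
    and iso: "\<And>q s. shift_stalk d f g P q s \<longleftrightarrow> split_stalk a b q (lin2 \<alpha> \<beta> \<gamma> \<epsilon> s)"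
    using sheaf_isoE[OF assms(2)] by metis
  have "regular_at (Some q) (\<alpha> * \<epsilon> - \<beta> * \<gamma>)" for q
  proof -
    have "split_stalk a b (Some q) (lin2 \<alpha> \<beta> \<gamma> \<epsilon> (1, 0))"
      "split_stalk a b (Some q) (lin2 \<alpha> \<beta> \<gamma> \<epsilon> (0, 1))"
      using iso shift_stalk_regularI regular_at_0 regular_at_1 by blast+
    then show ?thesis
      by (simp add: split_stalk_def lin2_def regular_at_mult regular_at_diff)
  qed
  then obtain D where D: "\<alpha> * \<epsilon> - \<beta> * \<gamma> = Fract D 1"
    by (rule regular_at_Some_imp_poly)
  with det have "D \<noteq> 0"
    by (auto simp: Zero_fract_def)
  have reg: "regular_at q (local_param q ^ of_bool (q \<in> P) * (det2 s t * Fract 1 D))"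
    if "split_stalk a b q s" "split_stalk a b q t" for q s t
    using regular_at_det2_shift_iso[OF det iso that] D by (simp add: divide_inverse One_fract_def)
  have "order q D \<le> of_bool (q \<in> Some -` P)" for q
  proof (rule order_le_if_regular_at_local_param_power[OF \<open>D \<noteq> 0\<close>])
    have "split_stalk a b (Some q) (1, 0)" "split_stalk a b (Some q) (0, 1)"
      by (simp_all add: split_stalk_def regular_at_0 regular_at_1)
    from reg[OF this]
    show "regular_at (Some q) (local_param (Some q) ^ of_bool (q \<in> Some -` P) * Fract 1 D)"
      by (simp add: det2_def)
  qed
  then have "degree D \<le> card (Some -` P)"
    using \<open>D \<noteq> 0\<close> assms(1) by (intro degree_le_card_if_order_le) (simp_all add: finite_vimageI)
  moreover have "a + b - of_bool (None \<in> P) \<le> int (degree D)"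
  proof -
    have "zcoord powi (- c) * zcoord powi c = 1" for c
      using power_int_add[of zcoord "- c" c] zcoord_nonzero by simp
    then have "split_stalk a b None (zcoord powi a, 0)" "split_stalk a b None (0, zcoord powi b)"
      by (simp_all add: split_stalk_def regular_at_0 regular_at_1)
    from reg[OF this] have "regular_at None
        (local_param None ^ of_bool (None \<in> P) * (zcoord powi a * zcoord powi b * Fract 1 D))"
      by (simp add: det2_def)
    moreover have "zcoord powi a * zcoord powi b = zcoord powi (a + b)"
      using zcoord_nonzero by (simp add: power_int_add)
    ultimately have "regular_at None (zcoord powi (a + b - of_bool (None \<in> P)) * Fract 1 D)"
      using local_param_None_power_mult[of "of_bool (None \<in> P)" "a + b"]
      by (simp add: mult.assoc[symmetric])
    then show ?thesis
      using \<open>D \<noteq> 0\<close> regular_at_None_zcoord_power_int_iff[of 1 D] by simp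
  qed
  ultimately show ?thesis
    using card_option_set[OF assms(1)] by (cases "None \<in> P") simp_all
qed

lemma shift_stalk_Some_vanishing_poly:
  assumes "finite P"
  defines "h \<equiv> vanishing_poly (Some -` P)"
  shows "shift_stalk d f g P (Some q) (Fract f h, Fract g h)"
proof (cases "Some q \<in> P")
  case False
  then have "poly h q \<noteq> 0"
    unfolding h_def by (simp add: poly_vanishing_poly_nonzero)
  then show ?thesis
    by (simp add: h_def vanishing_poly_nonzero regular_at_SomeI shift_stalk_regularI)
next
  case True
  define h' where "h' = vanishing_poly (Some -` P - {q})"
  have "h = [:-q, 1:] * h'"
    unfolding h_def h'_def using assms True by (intro vanishing_poly_remove) (simp_all add: finite_vimageI)
  then have "local_param (Some q) * Fract p h = Fract p h'" for p
    using mult_fract_cancel[of "[:-q, 1:]" p h'] by (simp add: local_param_def del: mult_pCons_left)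
  moreover have "h' \<noteq> 0" "poly h' q \<noteq> 0"
    unfolding h'_def by (simp_all add: vanishing_poly_nonzero poly_vanishing_poly_nonzero)
  moreover from this have "(value_at (Some q) (Fract f h'), value_at (Some q) (Fract g h'))
      \<in> line_fiber d f g (Some q)"
    by (auto simp: line_fiber_def value_at_Some_Fract intro!: exI[of _ "1 / poly h' q"])
  ultimately show ?thesis
    using True by (simp add: shift_stalk_def regular_at_SomeI)
qed

lemma shift_stalk_None_vanishing_poly:
  assumes "finite P" "degree f \<le> d" "degree g \<le> d"
  defines "h \<equiv> vanishing_poly (Some -` P)" and "k \<equiv> int (card P) - int d"
  shows "shift_stalk d f g P None (zcoord powi k * Fract f h, zcoord powi k * Fract g h)"
proof -
  have "finite (Some -` P)"
    using assms(1) by (simp add: finite_vimageI)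
  then have h: "h \<noteq> 0" "lead_coeff h = 1" "degree h = card (Some -` P)"
    unfolding h_def using vanishing_poly_nonzero lead_coeff_vanishing_poly degree_vanishing_poly
    by blast+
  have "k - of_bool (None \<in> P) = int (degree h) - int d"
    using card_option_set[OF assms(1)] h(3) unfolding k_def by simp
  then have reg: "regular_at None (zcoord powi (k - of_bool (None \<in> P)) * Fract p h)"
    and val: "value_at None (zcoord powi (k - of_bool (None \<in> P)) * Fract p h) = coeff p d"
    if "degree p \<le> d" for p
    using that h regular_at_None_zcoord_power_int[of h] value_at_None_zcoord_power_int[of h] by simp_all
  show ?thesis
  proof (cases "None \<in> P")
    case False
    then show ?thesis
      using reg assms(2,3) by (simp add: shift_stalk_regularI)
  next
    case True
    have "(value_at None (zcoord powi (k - 1) * Fract f h), value_at None (zcoord powi (k - 1) * Fract g h))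
        \<in> line_fiber d f g None"
      using True val assms(2,3) by (auto simp: line_fiber_def intro!: exI[of _ 1])
    then show ?thesis
      using True reg assms(2,3) local_param_None_power_mult[of 1 k]
      by (simp add: shift_stalk_def mult.assoc[symmetric])
  qed
qed

lemma card_le_split_degree_max:
  assumes "finite P" "degree f \<le> d" "degree g \<le> d" "f \<noteq> 0 \<or> g \<noteq> 0"
    and "sheaf_iso (shift_stalk d f g P) (split_stalk a b)"
  shows "int (card P) \<le> int d + max a b"
proof -
  obtain \<alpha> \<beta> \<gamma> \<epsilon> where det: "\<alpha> * \<epsilon> - \<beta> * \<gamma> \<noteq> 0"
    and iso: "\<And>q s. shift_stalk d f g P q s \<longleftrightarrow> split_stalk a b q (lin2 \<alpha> \<beta> \<gamma> \<epsilon> s)"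
    using sheaf_isoE[OF assms(5)] by metis
  define h where "h = vanishing_poly (Some -` P)"
  define k where "k = int (card P) - int d"
  define U where "U = fst (lin2 \<alpha> \<beta> \<gamma> \<epsilon> (Fract f h, Fract g h))"
  define V where "V = snd (lin2 \<alpha> \<beta> \<gamma> \<epsilon> (Fract f h, Fract g h))"
  have "split_stalk a b (Some q) (U, V)" for q
    using iso[of "Some q"] shift_stalk_Some_vanishing_poly[OF assms(1), of d f g q]
    by (simp add: U_def V_def h_def)
  then have "regular_at (Some q) U" "regular_at (Some q) V" for q
    by (simp_all add: split_stalk_def)
  then obtain u v where u: "U = Fract u 1" and v: "V = Fract v 1"
    by (metis regular_at_Some_imp_poly)
  have "split_stalk a b None (zcoord powi k * U, zcoord powi k * V)"
    using iso shift_stalk_None_vanishing_poly[OF assms(1-3)]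
    by (simp add: U_def V_def h_def k_def lin2_scale)
  then have "regular_at None (zcoord powi (k - a) * Fract u 1)"
    "regular_at None (zcoord powi (k - b) * Fract v 1)"
    using zcoord_nonzero by (simp_all add: split_stalk_def u v mult.assoc[symmetric] flip: power_int_add)
  moreover have "u \<noteq> 0 \<or> v \<noteq> 0"
  proof -
    have "h \<noteq> 0"
      by (simp add: h_def vanishing_poly_nonzero)
    then have "(Fract f h, Fract g h) \<noteq> (0, 0)"
      using assms(4) by (simp add: Zero_fract_def eq_fract)
    then have "(U, V) \<noteq> (0, 0)"
      using lin2_eq_zero_iff[OF det] by (simp add: U_def V_def)
    then show ?thesis
      by (auto simp: u v Zero_fract_def)
  qed
  ultimately have "k \<le> a \<or> k \<le> b"
    using regular_at_None_zcoord_power_int_iff[of u 1] regular_at_None_zcoord_power_int_iff[of v 1]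
    by auto
  then show ?thesis
    unfolding k_def by linarith
qed

theorem lemma7p2:
  fixes d :: nat and f g :: "complex poly" and P :: "complex option set"
  assumes "line_subbundle d f g"
    and "finite P"
    and "card P > 2 * d + 1"
  shows "\<not> evenly_split (shift_stalk d f g P)"
proof
  assume "evenly_split (shift_stalk d f g P)"
  then obtain a b :: int where "\<bar>a - b\<bar> \<le> 1" and iso: "sheaf_iso (shift_stalk d f g P) (split_stalk a b)"
    unfolding evenly_split_def by blast
  have fg: "degree f \<le> d" "degree g \<le> d" "f \<noteq> 0 \<or> g \<noteq> 0"
    using assms(1) by (auto simp: line_subbundle_def)
  have "int (card P) \<le> int d + max a b"
    using assms(2) fg iso by (rule card_le_split_degree_max)
  moreover have "a + b \<le> int (card P)"
    using assms(2) iso by (rule split_degree_sum_le_card)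
  ultimately show False
    using \<open>\<bar>a - b\<bar> \<le> 1\<close> assms(3) by linarith
qed

end
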